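(* Let $r\ge1$ and $\mu\in\mathcal P_r$. Then $\limsup_{n\to\infty} n\, d_r(\delta^{\mathbf u_n}_\bullet,\mu)>0$, unless $\mu=\delta_a$ for some $a\in\mathbb R$.
   Context: $\mathcal P$ denotes the set of Borel probability measures on $\mathbb R$; $\mathcal P_r=\{\mu\in\mathcal P:\int|x|^r{\rm d}\mu(x)<\infty\}$. For $\mu\in\mathcal P$, $F_\mu(x)=\mu(]-\infty,x])$ and $F_\mu^{-1}(t)=\sup\{x: F_\mu(x)\le t\}$, $t\in]0,1[$. $d_r(\mu,\nu)=\big(\int_0^1|F_\mu^{-1}(t)-F_\nu^{-1}(t)|^r{\rm d}t\big)^{1/r}$ on $\mathcal P_r$. With $\Xi_n=\{\mathbf x\in\mathbb R^n:x_1\le\dots\le x_n\}$ and $\delta^{\mathbf u_n}_{\mathbf x}=\frac1n\sum_{i=1}^n\delta_{x_i}$, set $d_r(\delta^{\mathbf u_n}_\bullet,\mu)=\min_{\mathbf x\in\Xi_n}d_r(\delta^{\mathbf u_n}_{\mathbf x},\mu)$ (the minimum is attained). *)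

theory Defs
  imports "HOL-Probability.Probability"
begin

definition quantile :: "real measure \<Rightarrow> real \<Rightarrow> real" where
  "quantile M t = Sup {x. cdf M x \<le> t}"

definition wass_dist :: "real \<Rightarrow> real measure \<Rightarrow> real measure \<Rightarrow> real" where
  "wass_dist r M N =
     (LINT t:{0<..<1}|lborel. \<bar>quantile M t - quantile N t\<bar> powr r) powr (1 / r)"

definition emp_measure :: "real list \<Rightarrow> real measure" where
  "emp_measure xs = measure_pmf (map_pmf (\<lambda>i. xs ! i) (pmf_of_set {..<length xs}))"

definition opt_quant_dist :: "real \<Rightarrow> nat \<Rightarrow> real measure \<Rightarrow> real" where
  "opt_quant_dist r n M =
     Inf ((\<lambda>xs. wass_dist r (emp_measure xs) M) ` {xs. length xs = n \<and> sorted xs})"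

end

theory Submission
  imports Defs
begin

text \<open>Unless \<mu> is a Dirac mass its quantile function q is not constant: q t1 < q t2 for some
  0 < t1 < t2 < 1.
  By Jensen's inequality d_r dominates the L1 distance of quantile functions, and the quantile
  function of an empirical measure with sorted atoms x_1, ..., x_n is the step function on the
  grid of mesh 1/n. The grids of mesh 1/n and 1/(n+1) interleave: either the (n+1)-point step
  function rises by (q t2 - q t1)/2 away from the ends of (0,1), and then every n-point step
  function is at L1 distance of order 1/n from it, or it is nearly flat there and misses the rise
  of q near t1 or t2 by a fixed amount. Hence d_r(n) + d_r(n+1) \<ge> c/(n+1) for some c > 0, and
  n d_r(n) \<ge> c/4 infinitely often.\<close>

lemma powr_ge_tangent:
  fixes x c r :: real
  assumes "1 \<le> r" "0 < c" "0 \<le> x"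
  shows "c powr r + r * c powr (r - 1) * (x - c) \<le> x powr r"
proof (cases "x = 0")
  case True
  have "c powr (r - 1) * c = c powr r" using assms(2) by (simp add: powr_diff)
  moreover have "c powr r \<le> r * c powr r" using assms(1) by (simp add: mult_le_cancel_right1)
  ultimately show ?thesis using True by (simp add: algebra_simps)
next
  case False
  have "r * c powr (r - 1) * (x - c) \<le> x powr r - c powr r"
    by (rule convex_on_imp_above_tangent[OF powr_convex[OF assms(1)]])
       (use assms False in \<open>auto simp: interior_open
          intro: has_field_derivative_at_within has_real_derivative_powr\<close>)
  then show ?thesis by simp
qed

lemma powr_add_le:
  fixes u v r :: real
  assumes "0 \<le> u" "0 \<le> v" "0 \<le> r"
  shows "(u + v) powr r \<le> 2 powr r * (u powr r + v powr r)"
proof -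
  have "(u + v) powr r \<le> (2 * max u v) powr r" using assms by (intro powr_mono2) auto
  also have "\<dots> = 2 powr r * max u v powr r" using assms by (simp add: powr_mult)
  also have "\<dots> \<le> 2 powr r * (u powr r + v powr r)"
    by (intro mult_left_mono) (auto simp: max_def)
  finally show ?thesis .
qed

lemma abs_le_one_add_abs_powr: "1 \<le> r \<Longrightarrow> \<bar>x :: real\<bar> \<le> 1 + \<bar>x\<bar> powr r"
proof (cases "\<bar>x\<bar> \<le> 1")
  case False
  assume "1 \<le> r"
  then have "\<bar>x\<bar> powr 1 \<le> \<bar>x\<bar> powr r" using False by (intro powr_mono) auto
  then show ?thesis by simp
qed (use powr_ge_zero[of "\<bar>x\<bar>" r] in linarith)

lemma (in prob_space) integral_le_integral_powr_root:
  fixes f :: "'a \<Rightarrow> real"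
  assumes "1 \<le> r" "\<And>x. 0 \<le> f x" "integrable M f" "integrable M (\<lambda>x. f x powr r)"
  shows "integral\<^sup>L M f \<le> (integral\<^sup>L M (\<lambda>x. f x powr r)) powr (1 / r)"
proof -
  define c where "c = integral\<^sup>L M f"
  have "c powr r \<le> integral\<^sup>L M (\<lambda>x. f x powr r)"
  proof (cases "c = 0")
    case True
    have "0 \<le> integral\<^sup>L M (\<lambda>x. f x powr r)" by (rule integral_nonneg_AE) simp
    then show ?thesis using True assms(1) by simp
  next
    case False
    then have "0 < c" using assms(2) by (simp add: c_def integral_nonneg_AE order_less_le)
    have "integral\<^sup>L M (\<lambda>x. c powr r + r * c powr (r - 1) * (f x - c))
        \<le> integral\<^sup>L M (\<lambda>x. f x powr r)"
      by (rule integral_mono) (use assms \<open>0 < c\<close> powr_ge_tangent in auto)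
    also have "integral\<^sup>L M (\<lambda>x. c powr r + r * c powr (r - 1) * (f x - c)) = c powr r"
      using assms(3) prob_space by (simp add: c_def)
    finally show ?thesis .
  qed
  then have "(c powr r) powr (1 / r) \<le> (integral\<^sup>L M (\<lambda>x. f x powr r)) powr (1 / r)"
    using assms(1) by (intro powr_mono2) auto
  moreover have "(c powr r) powr (1 / r) = c"
    using assms by (simp add: c_def powr_powr integral_nonneg_AE)
  ultimately show ?thesis by (simp add: c_def)
qed

lemma (in prob_space) integrable_abs_diff_powr_if_bounded:
  fixes e q :: "'a \<Rightarrow> real"
  assumes "1 \<le> r" "integrable M (\<lambda>x. \<bar>q x\<bar> powr r)"
    and "q \<in> borel_measurable M" "e \<in> borel_measurable M" "\<And>x. x \<in> space M \<Longrightarrow> \<bar>e x\<bar> \<le> B"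
  shows "integrable M (\<lambda>x. \<bar>e x - q x\<bar> powr r)" "integrable M (\<lambda>x. \<bar>e x - q x\<bar>)"
proof -
  have "0 \<le> B" using assms(5) not_empty by fastforce
  show powr: "integrable M (\<lambda>x. \<bar>e x - q x\<bar> powr r)"
  proof (rule Bochner_Integration.integrable_bound)
    show "integrable M (\<lambda>x. 2 powr r * (B powr r + \<bar>q x\<bar> powr r))"
      using assms(2) by (intro integrable_mult_right Bochner_Integration.integrable_add) auto
    show "(\<lambda>x. \<bar>e x - q x\<bar> powr r) \<in> borel_measurable M" using assms(3,4) by measurable
    have "\<bar>e x - q x\<bar> powr r \<le> 2 powr r * (B powr r + \<bar>q x\<bar> powr r)" if "x \<in> space M" for x
    proof -
      have "\<bar>e x - q x\<bar> powr r \<le> (B + \<bar>q x\<bar>) powr r"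
        using assms(1) assms(5)[OF that] by (intro powr_mono2) auto
      also have "\<dots> \<le> 2 powr r * (B powr r + \<bar>q x\<bar> powr r)"
        using \<open>0 \<le> B\<close> assms(1) by (intro powr_add_le) auto
      finally show ?thesis .
    qed
    then show "AE x in M. norm (\<bar>e x - q x\<bar> powr r) \<le> norm (2 powr r * (B powr r + \<bar>q x\<bar> powr r))"
      by (intro AE_I2) simp
  qed
  show "integrable M (\<lambda>x. \<bar>e x - q x\<bar>)"
  proof (rule Bochner_Integration.integrable_bound)
    show "integrable M (\<lambda>x. 1 + \<bar>e x - q x\<bar> powr r)" using powr by auto
    show "(\<lambda>x. \<bar>e x - q x\<bar>) \<in> borel_measurable M" using assms(3,4) by measurable
    show "AE x in M. norm \<bar>e x - q x\<bar> \<le> norm (1 + \<bar>e x - q x\<bar> powr r)"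
      using abs_le_one_add_abs_powr[OF assms(1)] by (intro AE_I2) (simp add: add_nonneg_nonneg)
  qed
qed

lemma integral_abs_diff_triangle:
  fixes f g h :: "'a \<Rightarrow> real"
  assumes "integrable M (\<lambda>x. \<bar>f x - g x\<bar>)" "integrable M (\<lambda>x. \<bar>f x - h x\<bar>)"
    "integrable M (\<lambda>x. \<bar>g x - h x\<bar>)"
  shows "integral\<^sup>L M (\<lambda>x. \<bar>f x - g x\<bar>)
    \<le> integral\<^sup>L M (\<lambda>x. \<bar>f x - h x\<bar>) + integral\<^sup>L M (\<lambda>x. \<bar>g x - h x\<bar>)"
proof -
  have "integral\<^sup>L M (\<lambda>x. \<bar>f x - g x\<bar>) \<le> integral\<^sup>L M (\<lambda>x. \<bar>f x - h x\<bar> + \<bar>g x - h x\<bar>)"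
    using assms by (intro integral_mono Bochner_Integration.integrable_add) auto
  also have "\<dots> = integral\<^sup>L M (\<lambda>x. \<bar>f x - h x\<bar>) + integral\<^sup>L M (\<lambda>x. \<bar>g x - h x\<bar>)"
    using assms(2,3) by (rule Bochner_Integration.integral_add)
  finally show ?thesis .
qed

lemma le_Inf_add_Inf:
  fixes f g :: "'a \<Rightarrow> real"
  assumes "A \<noteq> {}" "B \<noteq> {}" "\<And>a b. a \<in> A \<Longrightarrow> b \<in> B \<Longrightarrow> c \<le> f a + g b"
  shows "c \<le> Inf (f ` A) + Inf (g ` B)"
proof -
  have "c - Inf (g ` B) \<le> f a" if "a \<in> A" for a
  proof -
    have "c - f a \<le> Inf (g ` B)"
      using assms(2,3) that by (intro cInf_greatest) (auto simp: algebra_simps)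
    then show ?thesis by linarith
  qed
  then have "c - Inf (g ` B) \<le> Inf (f ` A)"
    using assms(1) by (intro cInf_greatest) auto
  then show ?thesis by linarith
qed

lemma limsup_mult_pos_if_consecutive_sum_ge:
  fixes u :: "nat \<Rightarrow> real"
  assumes "0 < c" "\<And>n. 0 < n \<Longrightarrow> c / (real n + 1) \<le> u n + u (Suc n)"
  shows "0 < limsup (\<lambda>n. ereal (real n * u n))"
proof -
  have often: "\<exists>m\<ge>N. c / 4 \<le> real m * u m" for N
  proof (cases "c / (2 * (real N + 2)) \<le> u (Suc N)")
    case True
    have "c / 4 \<le> (real N + 1) * (c / (2 * (real N + 2)))"
      using assms(1) by (simp add: field_simps)
    also have "\<dots> \<le> (real N + 1) * u (Suc N)" using True by (intro mult_left_mono) auto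
    finally show ?thesis by (intro exI[of _ "Suc N"]) (auto simp: add.commute)
  next
    case False
    then have "c / (2 * (real N + 2)) \<le> u (Suc (Suc N))"
      using assms(2)[of "Suc N"] by (simp add: field_simps)
    then have "c / 4 \<le> (real N + 2) * u (Suc (Suc N))"
      using assms(1) by (simp add: field_simps)
    then show ?thesis by (intro exI[of _ "Suc (Suc N)"]) (auto simp: add.commute)
  qed
  have "ereal (c / 4) \<le> limsup (\<lambda>n. ereal (real n * u n))"
    unfolding limsup_INF_SUP
  proof (rule INF_greatest)
    fix N :: nat
    obtain m where "N \<le> m" "c / 4 \<le> real m * u m" using often by blast
    then show "ereal (c / 4) \<le> (SUP n\<in>{N..}. ereal (real n * u n))"
      by (intro SUP_upper2[of m]) auto
  qed
  then show ?thesis using assms(1) by (simp add: order.strict_trans2[rotated])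
qed

section \<open>Quantile functions\<close>

context real_distribution
begin

lemma quantile_set_nonempty: "0 < t \<Longrightarrow> {x. cdf M x \<le> t} \<noteq> {}"
proof -
  assume "0 < t"
  then have "eventually (\<lambda>x. cdf M x < t) at_bot"
    using order_tendstoD(2)[OF cdf_lim_at_bot] by blast
  then obtain x where "cdf M x < t"
    using eventually_happens' trivial_limit_at_bot_linorder by blast
  then show ?thesis by (auto intro: less_imp_le)
qed

lemma bdd_above_quantile_set: "t < 1 \<Longrightarrow> bdd_above {x. cdf M x \<le> t}"
proof -
  assume "t < 1"
  then have "eventually (\<lambda>x. t < cdf M x) at_top"
    using order_tendstoD(1)[OF cdf_lim_at_top_prob] by blast
  then obtain y where y: "t < cdf M y"
    using eventually_happens' trivial_limit_at_top_linorder by blast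
  show ?thesis
  proof (rule bdd_aboveI)
    fix x assume "x \<in> {x. cdf M x \<le> t}"
    then show "x \<le> y" using y cdf_nondecreasing[of y x] by (cases "x \<le> y") auto
  qed
qed

lemma quantile_upper: "0 < t \<Longrightarrow> t < 1 \<Longrightarrow> cdf M x \<le> t \<Longrightarrow> x \<le> quantile M t"
  unfolding quantile_def by (rule cSup_upper) (auto intro: bdd_above_quantile_set)

lemma quantile_least: "0 < t \<Longrightarrow> t < 1 \<Longrightarrow> t < cdf M y \<Longrightarrow> quantile M t \<le> y"
  unfolding quantile_def
proof (rule cSup_least)
  assume "0 < t" "t < 1" "t < cdf M y"
  then show "{x. cdf M x \<le> t} \<noteq> {}" using quantile_set_nonempty by auto
  fix x assume "x \<in> {x. cdf M x \<le> t}"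
  then show "x \<le> y" using \<open>t < cdf M y\<close> cdf_nondecreasing[of y x] by (cases "x \<le> y") auto
qed

lemma cdf_le_if_less_quantile: "0 < t \<Longrightarrow> t < 1 \<Longrightarrow> x < quantile M t \<Longrightarrow> cdf M x \<le> t"
proof -
  assume "0 < t" "t < 1" "x < quantile M t"
  then obtain y where "cdf M y \<le> t" "x < y"
    using less_cSupD[OF quantile_set_nonempty] unfolding quantile_def by blast
  then show ?thesis using cdf_nondecreasing[of x y] by auto
qed

lemma mono_on_quantile: "mono_on {0<..<1} (quantile M)"
proof (rule mono_onI)
  fix s t :: real assume "s \<in> {0<..<1}" "t \<in> {0<..<1}" "s \<le> t"
  then show "quantile M s \<le> quantile M t" unfolding quantile_def
    by (intro cSup_subset_mono quantile_set_nonempty bdd_above_quantile_set) auto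
qed

lemma eq_return_if_quantile_const:
  assumes const: "\<And>t. 0 < t \<Longrightarrow> t < 1 \<Longrightarrow> quantile M t = a"
  shows "M = return borel a"
proof (rule cdf_unique)
  show "real_distribution M" by unfold_locales
  show "real_distribution (return borel a)"
    by (simp add: real_distribution_def real_distribution_axioms_def prob_space_return)
  have above: "cdf M x = 1" if "a < x" for x
  proof (rule ccontr)
    assume "cdf M x \<noteq> 1"
    then have "cdf M x < 1" using cdf_bounded_prob[of x] by auto
    define t where "t = max (1/2) (cdf M x)"
    have "0 < t" "t < 1" "cdf M x \<le> t" using \<open>cdf M x < 1\<close> by (auto simp: t_def)
    then have "x \<le> quantile M t" by (rule quantile_upper)
    then show False using const[OF \<open>0 < t\<close> \<open>t < 1\<close>] that by auto
  qed
  have below: "cdf M x = 0" if "x < a" for x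
  proof (rule ccontr)
    assume "cdf M x \<noteq> 0"
    then have pos: "0 < cdf M x" using cdf_nonneg[of x] by auto
    define t where "t = min (cdf M x / 2) (1/2)"
    have "0 < t" "t < 1" using pos by (auto simp: t_def)
    then have "cdf M x \<le> t" using cdf_le_if_less_quantile const \<open>x < a\<close> by auto
    then show False using pos by (auto simp: t_def)
  qed
  have at: "cdf M a = 1"
  proof -
    have "(cdf M \<longlongrightarrow> cdf M a) (at_right a)"
      using cdf_is_right_cont[of a] by (simp add: continuous_within)
    moreover have "(cdf M \<longlongrightarrow> 1) (at_right a)"
      using eventually_at_right_less[of a] above
      by (intro tendsto_eventually) (auto elim: eventually_mono)
    ultimately show ?thesis using tendsto_unique trivial_limit_at_right_real by blast
  qed
  show "cdf M = cdf (return borel a)"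
  proof
    fix x
    show "cdf M x = cdf (return borel a) x"
      using above below at by (cases x a rule: linorder_cases) (auto simp: cdf_def measure_return)
  qed
qed

lemma ex_quantile_less:
  assumes "\<nexists>a. M = return borel a"
  shows "\<exists>t1 t2. 0 < t1 \<and> t1 < t2 \<and> t2 < 1 \<and> quantile M t1 < quantile M t2"
proof (rule ccontr)
  assume flat: "\<not> ?thesis"
  have no_increase: "\<not> quantile M s < quantile M t" if "0 < s" "s < t" "t < 1" for s t
    using flat that by blast
  have "quantile M t = quantile M (1/2)" if "0 < t" "t < 1" for t
  proof (cases t "1/2::real" rule: linorder_cases)
    case less
    then show ?thesis
      using mono_onD[OF mono_on_quantile, of t "1/2"] no_increase[of t "1/2"] that by simp
  next
    case greater
    then show ?thesis
      using mono_onD[OF mono_on_quantile, of "1/2" t] no_increase[of "1/2" t] that by simp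
  qed (simp only:)
  then show False using eq_return_if_quantile_const assms by blast
qed

end

abbreviation lborel_01 :: "real measure" where
  "lborel_01 \<equiv> restrict_space lborel {0<..<1}"

lemma prob_space_lborel_01: "prob_space lborel_01"
  by (auto simp add: emeasure_restrict_space space_restrict_space intro!: prob_spaceI)

lemma borel_measurable_lborel_01_if_mono_on:
  "mono_on {0<..<1} f \<Longrightarrow> (f :: real \<Rightarrow> real) \<in> borel_measurable lborel_01"
  using borel_measurable_mono_on_fnc[of "{0<..<1}" f]
  by (subst measurable_cong_sets[OF sets_restrict_space_cong[OF sets_lborel] refl]) auto

lemma set_integral_01_eq_integral_lborel_01:
  "(LINT t:{0<..<1}|lborel. f t) = integral\<^sup>L lborel_01 (f :: real \<Rightarrow> real)"
  unfolding set_lebesgue_integral_def by (rule integral_restrict_space[symmetric]) simp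

lemma integral_lborel_01_ge:
  fixes g \<psi> :: "real \<Rightarrow> real"
  assumes "integrable lborel_01 g" "integrable lborel \<psi>"
    and "\<And>t. 0 < t \<Longrightarrow> t < 1 \<Longrightarrow> \<psi> t \<le> g t" "\<And>t. t \<notin> {0<..<1} \<Longrightarrow> \<psi> t \<le> 0"
  shows "integral\<^sup>L lborel \<psi> \<le> integral\<^sup>L lborel_01 g"
proof -
  have "integral\<^sup>L lborel \<psi> \<le> integral\<^sup>L lborel (\<lambda>t. indicator {0<..<1} t *\<^sub>R g t)"
  proof (rule integral_mono)
    show "integrable lborel (\<lambda>t. indicator {0<..<1} t *\<^sub>R g t)"
      using assms(1) integrable_restrict_space[of "{0<..<1::real}" lborel g] by simp
    show "\<psi> t \<le> indicator {0<..<1} t *\<^sub>R g t" for t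
      using assms(3,4)[of t] by (cases "t \<in> {0<..<1}") auto
  qed fact
  also have "\<dots> = integral\<^sup>L lborel_01 g"
    by (rule integral_restrict_space[symmetric]) simp
  finally show ?thesis .
qed

lemma integral_lborel_01_ge_interval:
  fixes g :: "real \<Rightarrow> real"
  assumes "integrable lborel_01 g" "0 \<le> u" "u \<le> v" "v \<le> 1"
    and "\<And>t. 0 < t \<Longrightarrow> t < 1 \<Longrightarrow> 0 \<le> g t" "\<And>t. u < t \<Longrightarrow> t < v \<Longrightarrow> \<delta> \<le> g t"
  shows "\<delta> * (v - u) \<le> integral\<^sup>L lborel_01 g"
proof -
  have "integral\<^sup>L lborel (\<lambda>t. \<delta> * indicator {u<..<v} t) \<le> integral\<^sup>L lborel_01 g"
  proof (rule integral_lborel_01_ge[OF assms(1)])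
    show "integrable lborel (\<lambda>t. \<delta> * indicator {u<..<v} t)"
      using assms(3) by (intro integrable_mult_right integrable_real_indicator) auto
    show "\<delta> * indicator {u<..<v} t \<le> g t" if "0 < t" "t < 1" for t
      using assms(5,6)[of t] that by (cases "t \<in> {u<..<v}") auto
    show "\<delta> * indicator {u<..<v} t \<le> 0" if "t \<notin> {0<..<1}" for t
      using that assms(2,4) by (auto simp: indicator_def)
  qed
  then show ?thesis using assms(3) by simp
qed

context cdf_distribution
begin

lemma I_le_quantile: "0 < t \<Longrightarrow> t < 1 \<Longrightarrow> I t \<le> quantile M t"
proof (rule dense_le)
  fix x assume "0 < t" "t < 1" "x < I t"
  then have "\<not> t \<le> C x" using pseudoinverse[of t x] by auto
  then show "x \<le> quantile M t" using \<open>0 < t\<close> \<open>t < 1\<close> by (intro quantile_upper) auto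
qed

lemma quantile_le_I: "0 < s \<Longrightarrow> s < t \<Longrightarrow> t < 1 \<Longrightarrow> quantile M s \<le> I t"
  using pseudoinverse[of t "I t"] by (intro quantile_least) auto

text \<open>quantile M is the right-continuous and I the left-continuous inverse of the cdf. They differ
  only at the countably many levels of flat pieces of the cdf, which are separated by rationals.\<close>
lemma AE_quantile_eq_I: "AE t in lborel_01. quantile M t = I t"
proof -
  define S where "S = {t\<in>{0<..<1::real}. I t < quantile M t}"
  define g where "g t = (SOME r. r \<in> \<rat> \<and> I t < r \<and> r < quantile M t)" for t
  have g: "g t \<in> \<rat> \<and> I t < g t \<and> g t < quantile M t" if "t \<in> S" for t
    unfolding g_def by (rule someI_ex) (use that Rats_dense_in_real in \<open>auto simp: S_def\<close>)
  have "inj_on g S"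
  proof (rule inj_onI, rule ccontr)
    fix s t assume st: "s \<in> S" "t \<in> S" "g s = g t" "s \<noteq> t"
    have "quantile M (min s t) \<le> I (max s t)"
      using st by (intro quantile_le_I) (auto simp: S_def min_def max_def)
    then show False
      using g[OF st(1)] g[OF st(2)] st(3,4) by (auto simp: min_def max_def split: if_splits)
  qed
  moreover have "countable (g ` S)"
    using g countable_rat by (auto intro: countable_subset)
  ultimately have "countable S" using countable_image_inj_on by blast
  then have "S \<in> null_sets lborel" by (rule countable_imp_null_set_lborel)
  then have "AE t in lborel. t \<in> {0<..<1} \<longrightarrow> quantile M t = I t"
    by (rule AE_I') (use I_le_quantile in \<open>force simp: S_def\<close>)
  then show ?thesis by (subst AE_restrict_space_iff) simp_all
qed

lemma integrable_comp_quantile: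
  assumes "f \<in> borel_measurable borel" "integrable M (f :: real \<Rightarrow> real)"
  shows "integrable lborel_01 (\<lambda>t. f (quantile M t))"
proof -
  have "I \<in> measurable lborel_01 borel"
    using measurable_CI
    by (subst measurable_cong_sets[OF sets_restrict_space_cong[OF sets_lborel] refl])
  then have "integrable lborel_01 (\<lambda>t. f (I t))"
    using integrable_distr_eq[of I lborel_01 borel f] distr_I_eq_M assms by simp
  moreover have "(\<lambda>t. f (quantile M t)) \<in> borel_measurable lborel_01"
    using borel_measurable_lborel_01_if_mono_on[OF mono_on_quantile] assms(1) by measurable
  ultimately show ?thesis
    by (rule integrable_cong_AE_imp) (use AE_quantile_eq_I in \<open>auto\<close>)
qed

end

section \<open>Empirical quantile functions\<close>

definition emp_quantile :: "real list \<Rightarrow> real \<Rightarrow> real" where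
  "emp_quantile xs t = xs ! nat \<lfloor>real (length xs) * t\<rfloor>"

lemma emp_quantile_eqI:
  "real k \<le> real (length xs) * t \<Longrightarrow> real (length xs) * t < real k + 1 \<Longrightarrow> emp_quantile xs t = xs ! k"
  unfolding emp_quantile_def by (metis floor_eq2 nat_int of_int_of_nat_eq)

lemma emp_quantile_index_less: "xs \<noteq> [] \<Longrightarrow> t < 1 \<Longrightarrow> nat \<lfloor>real (length xs) * t\<rfloor> < length xs"
proof -
  assume "xs \<noteq> []" "t < 1"
  then have "real (length xs) * t < real (length xs)" by simp
  moreover have "0 < length xs" using \<open>xs \<noteq> []\<close> by simp
  ultimately show ?thesis by linarith
qed

lemma nth_le_emp_quantile:
  assumes "sorted xs" "xs \<noteq> []" "real i \<le> real (length xs) * t" "t < 1"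
  shows "xs ! i \<le> emp_quantile xs t"
  unfolding emp_quantile_def using assms(3)
  by (intro sorted_nth_mono[OF assms(1)] emp_quantile_index_less[OF assms(2,4)]) linarith

lemma emp_quantile_le_nth:
  assumes "sorted xs" "j < length xs" "real (length xs) * t < real j + 1"
  shows "emp_quantile xs t \<le> xs ! j"
  unfolding emp_quantile_def using assms by (intro sorted_nth_mono) linarith+

lemma mono_on_emp_quantile: "sorted xs \<Longrightarrow> xs \<noteq> [] \<Longrightarrow> mono_on {0<..<1} (emp_quantile xs)"
proof (rule mono_onI)
  fix s t :: real assume xs: "sorted xs" "xs \<noteq> []" and "s \<in> {0<..<1}" "t \<in> {0<..<1}" "s \<le> t"
  define k where "k = nat \<lfloor>real (length xs) * t\<rfloor>"
  have "real (length xs) * s \<le> real (length xs) * t"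
    using \<open>s \<le> t\<close> by (intro mult_left_mono) auto
  moreover have "0 \<le> real (length xs) * t" using \<open>t \<in> {0<..<1}\<close> by simp
  ultimately have "real (length xs) * s < real k + 1" unfolding k_def by linarith
  moreover have "k < length xs"
    unfolding k_def using xs \<open>t \<in> {0<..<1}\<close> by (simp add: emp_quantile_index_less)
  ultimately have "emp_quantile xs s \<le> xs ! k" by (intro emp_quantile_le_nth[OF xs(1)])
  then show "emp_quantile xs s \<le> emp_quantile xs t" by (simp add: emp_quantile_def k_def)
qed

lemma abs_emp_quantile_le:
  "xs \<noteq> [] \<Longrightarrow> t < 1 \<Longrightarrow> \<bar>emp_quantile xs t\<bar> \<le> (\<Sum>i<length xs. \<bar>xs ! i\<bar>)"
  unfolding emp_quantile_def
  by (rule member_le_sum[of _ _ "\<lambda>i. \<bar>xs ! i\<bar>"]) (auto intro: emp_quantile_index_less)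

lemma integrable_emp_quantile:
  "sorted xs \<Longrightarrow> xs \<noteq> [] \<Longrightarrow> integrable lborel_01 (emp_quantile xs)"
  by (intro finite_measure.integrable_const_bound[where B="\<Sum>i<length xs. \<bar>xs ! i\<bar>"]
      prob_space.finite_measure prob_space_lborel_01 AE_I2 borel_measurable_lborel_01_if_mono_on
      mono_on_emp_quantile) (auto intro: abs_emp_quantile_le)

lemma cdf_emp_measure:
  "xs \<noteq> [] \<Longrightarrow> cdf (emp_measure xs) x = card {i. i < length xs \<and> xs ! i \<le> x} / length xs"
  unfolding cdf_def emp_measure_def
  by (subst measure_map_pmf, subst measure_pmf_of_set) (auto simp: Int_def)

lemma sorted_card_le_iff:
  assumes "sorted xs" "k < length xs"
  shows "card {i. i < length xs \<and> xs ! i \<le> x} \<le> k \<longleftrightarrow> x < xs ! k"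
proof
  assume "card {i. i < length xs \<and> xs ! i \<le> x} \<le> k"
  moreover have "card {..k} \<le> card {i. i < length xs \<and> xs ! i \<le> x}" if "xs ! k \<le> x"
    using that assms sorted_nth_mono[OF assms(1)] by (intro card_mono) (auto intro: order_trans)
  ultimately show "x < xs ! k" by force
next
  assume "x < xs ! k"
  have "i < k" if "i < length xs" "xs ! i \<le> x" for i
    using sorted_nth_mono[OF assms(1), of k i] that \<open>x < xs ! k\<close> by (cases "k \<le> i") auto
  then have "{i. i < length xs \<and> xs ! i \<le> x} \<subseteq> {..<k}" by auto
  then show "card {i. i < length xs \<and> xs ! i \<le> x} \<le> k"
    by (metis card_lessThan card_mono finite_lessThan)
qed

lemma quantile_emp_measure:
  assumes "sorted xs" "xs \<noteq> []" "0 < t" "t < 1"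
  shows "quantile (emp_measure xs) t = emp_quantile xs t"
proof -
  define n where "n = length xs"
  define k where "k = nat \<lfloor>real n * t\<rfloor>"
  have k: "k < n" using emp_quantile_index_less assms by (simp add: k_def n_def)
  have "cdf (emp_measure xs) x \<le> t \<longleftrightarrow> x < xs ! k" for x
  proof -
    have "cdf (emp_measure xs) x \<le> t \<longleftrightarrow> real (card {i. i < n \<and> xs ! i \<le> x}) \<le> real n * t"
      using assms(2) by (simp add: cdf_emp_measure n_def divide_le_eq mult.commute)
    also have "\<dots> \<longleftrightarrow> card {i. i < n \<and> xs ! i \<le> x} \<le> k"
      using mult_nonneg_nonneg[of "real n" t] assms(3) unfolding k_def by (intro iffI) linarith+
    finally show ?thesis using sorted_card_le_iff[OF assms(1)] k by (simp add: n_def)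
  qed
  then have "{x. cdf (emp_measure xs) x \<le> t} = {..<xs ! k}" by auto
  then show ?thesis by (simp add: quantile_def emp_quantile_def k_def n_def)
qed

lemma (in cdf_distribution) integral_abs_emp_quantile_diff_le_wass_dist:
  assumes "1 \<le> r" "integrable M (\<lambda>x. \<bar>x\<bar> powr r)" "sorted xs" "xs \<noteq> []"
  shows "integrable lborel_01 (\<lambda>t. \<bar>emp_quantile xs t - quantile M t\<bar>)"
    and "integral\<^sup>L lborel_01 (\<lambda>t. \<bar>emp_quantile xs t - quantile M t\<bar>)
      \<le> wass_dist r (emp_measure xs) M"
proof -
  interpret U: prob_space lborel_01 by (rule prob_space_lborel_01)
  have "integrable lborel_01 (\<lambda>t. \<bar>quantile M t\<bar> powr r)"
    by (rule integrable_comp_quantile[OF _ assms(2)]) measurable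
  note integrable = U.integrable_abs_diff_powr_if_bounded[OF assms(1) this
      borel_measurable_lborel_01_if_mono_on[OF mono_on_quantile]
      borel_measurable_lborel_01_if_mono_on[OF mono_on_emp_quantile[OF assms(3,4)]]
      abs_emp_quantile_le[OF assms(4)]]
  then show "integrable lborel_01 (\<lambda>t. \<bar>emp_quantile xs t - quantile M t\<bar>)" by simp
  have "wass_dist r (emp_measure xs) M
      = (integral\<^sup>L lborel_01 (\<lambda>t. \<bar>emp_quantile xs t - quantile M t\<bar> powr r)) powr (1 / r)"
    unfolding wass_dist_def set_integral_01_eq_integral_lborel_01
    by (intro arg_cong2[where f="(powr)"] Bochner_Integration.integral_cong)
       (simp_all add: quantile_emp_measure assms(3,4))
  then show "integral\<^sup>L lborel_01 (\<lambda>t. \<bar>emp_quantile xs t - quantile M t\<bar>)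
      \<le> wass_dist r (emp_measure xs) M"
    using U.integral_le_integral_powr_root[OF assms(1) _ integrable(2,1)] by simp
qed

section \<open>Consecutive empirical quantiles\<close>

lemma emp_quantiles_on_left_cell:
  assumes "length a = n" "length b = Suc n" "0 < n"
    and "real k / real n < t" "t < (real k + 1) / (real n + 1)"
  shows "emp_quantile a t = a ! k" "emp_quantile b t = b ! k"
proof -
  have "real k < real n * t" "(real n + 1) * t < real k + 1"
    using assms(3-5) by (simp_all add: divide_less_eq less_divide_eq mult.commute)
  moreover have "0 < t" using assms(4) divide_nonneg_nonneg[of "real k" "real n"] by linarith
  ultimately show "emp_quantile a t = a ! k" "emp_quantile b t = b ! k"
    using assms(1,2) by (auto intro!: emp_quantile_eqI simp: algebra_simps)
qed

lemma emp_quantiles_on_right_cell: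
  assumes "length a = n" "length b = Suc n" "k < n"
    and "(real k + 1) / (real n + 1) < t" "t < (real k + 1) / real n"
  shows "emp_quantile a t = a ! k" "emp_quantile b t = b ! Suc k"
proof -
  have "(real k + 1) / real n \<le> 1" using assms(3) by simp
  with assms(5) have "t < 1" by linarith
  moreover have "real k + 1 < (real n + 1) * t" "real n * t < real k + 1"
    using assms(3-5) by (simp_all add: divide_less_eq less_divide_eq mult.commute)
  ultimately show "emp_quantile a t = a ! k" "emp_quantile b t = b ! Suc k"
    using assms(1,2) by (auto intro!: emp_quantile_eqI simp: algebra_simps)
qed

text \<open>The grids of mesh 1/n and 1/(n+1) interleave: inside the k-th cell of the first grid the
  (n+1)-point step function jumps from b!k to b!(k+1) while the n-point one stays at a!k, so each
  jump of b costs the length of the shorter half-cell L k or R k in the L1 distance.\<close>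
lemma integral_abs_emp_quantile_diff_ge:
  fixes a b :: "real list"
  assumes "sorted a" "sorted b" "length a = n" "length b = Suc n" "0 < n"
    and "i \<le> j" "j < n" "0 \<le> w"
    and "w * (real n * (real n + 1)) \<le> real i + 1" "w * (real n * (real n + 1)) \<le> real n - real j"
  shows "w * (b ! Suc j - b ! i) \<le> integral\<^sup>L lborel_01 (\<lambda>t. \<bar>emp_quantile a t - emp_quantile b t\<bar>)"
proof -
  define N where "N = real n"
  have N: "0 < N" using assms(5) by (simp add: N_def)
  define L where "L k = {real k / N <..< (real k + 1) / (N + 1)}" for k :: nat
  define R where "R k = {(real k + 1) / (N + 1) <..< (real k + 1) / N}" for k :: nat
  define cell where "cell k t = \<bar>a ! k - b ! k\<bar> * indicator (L k) t
    + \<bar>a ! k - b ! Suc k\<bar> * indicator (R k) t" for k t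
  define \<psi> where "\<psi> t = (\<Sum>k\<in>{i..j}. cell k t)" for t
  have len_L: "w \<le> (real k + 1) / (N + 1) - real k / N"
   and len_R: "w \<le> (real k + 1) / N - (real k + 1) / (N + 1)"
   and le_1: "(real k + 1) / N \<le> 1" if "k \<in> {i..j}" for k
  proof -
    have "(real k + 1) / (N + 1) - real k / N = (N - real k) / (N * (N + 1))"
      "(real k + 1) / N - (real k + 1) / (N + 1) = (real k + 1) / (N * (N + 1))"
      using N by (simp_all add: field_simps)
    moreover have "w * (N * (N + 1)) \<le> N - real k" "w * (N * (N + 1)) \<le> real k + 1" "real k + 1 \<le> N"
      using that assms(7,9,10) by (auto simp: N_def)
    moreover have "0 < N * (N + 1)" using N by simp
    ultimately show "w \<le> (real k + 1) / (N + 1) - real k / N"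
      "w \<le> (real k + 1) / N - (real k + 1) / (N + 1)" "(real k + 1) / N \<le> 1"
      using N by (simp_all add: pos_le_divide_eq)
  qed
  have integral_cell: "w * (b ! Suc k - b ! k) \<le> integral\<^sup>L lborel (cell k)"
    and integrable_cell: "integrable lborel (cell k)" if "k \<in> {i..j}" for k
  proof -
    have "w * (b ! Suc k - b ! k) \<le> w * \<bar>a ! k - b ! k\<bar> + w * \<bar>a ! k - b ! Suc k\<bar>"
      using assms(8) by (simp add: distrib_left[symmetric] mult_left_mono)
    also have "\<dots> \<le> \<bar>a ! k - b ! k\<bar> * ((real k + 1) / (N + 1) - real k / N)
        + \<bar>a ! k - b ! Suc k\<bar> * ((real k + 1) / N - (real k + 1) / (N + 1))"
      using len_L[OF that] len_R[OF that]
      by (intro add_mono) (metis abs_ge_zero mult.commute mult_left_mono)+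
    also have "\<dots> = integral\<^sup>L lborel (cell k)"
      using len_L[OF that] len_R[OF that] assms(8) unfolding cell_def L_def R_def by simp
    finally show "w * (b ! Suc k - b ! k) \<le> integral\<^sup>L lborel (cell k)" .
    show "integrable lborel (cell k)"
      using len_L[OF that] len_R[OF that] assms(8) unfolding cell_def L_def R_def
      by (intro Bochner_Integration.integrable_add integrable_mult_right integrable_real_indicator)
        auto
  qed
  have cell_le: "cell k t \<le> \<bar>emp_quantile a t - emp_quantile b t\<bar>" if "k \<in> {i..j}" for k t
    using emp_quantiles_on_left_cell[OF assms(3-5), of k t]
      emp_quantiles_on_right_cell[OF assms(3,4), of k t]
      that assms(7) unfolding cell_def L_def R_def N_def by (auto simp: indicator_def)
  have cell_eq_0: "cell k t = 0" if "k \<in> {i..j}" "k \<noteq> nat \<lfloor>N * t\<rfloor> \<or> t \<notin> {0<..<1}" for k t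
  proof -
    have "t \<notin> L k \<union> R k"
    proof
      assume "t \<in> L k \<union> R k"
      then have "real k / N < t" "t < (real k + 1) / N"
        using len_L[OF that(1)] len_R[OF that(1)] assms(8) unfolding L_def R_def by auto
      moreover have "0 \<le> real k / N" using N by simp
      ultimately have "t \<in> {0<..<1}" using le_1[OF that(1)] by auto
      moreover have "real k < N * t" "N * t < real k + 1"
        using N \<open>real k / N < t\<close> \<open>t < (real k + 1) / N\<close> by (simp_all add: field_simps)
      ultimately show False using that(2) by (auto, linarith)
    qed
    then show ?thesis by (simp add: cell_def)
  qed
  have "w * (b ! Suc j - b ! i) = (\<Sum>k\<in>{i..j}. w * (b ! Suc k - b ! k))"
    using sum_Suc_diff[of i j "(!) b"] assms(6) by (simp add: sum_distrib_left[symmetric])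
  also have "\<dots> \<le> (\<Sum>k\<in>{i..j}. integral\<^sup>L lborel (cell k))"
    by (intro sum_mono integral_cell)
  also have "\<dots> = integral\<^sup>L lborel \<psi>"
    unfolding \<psi>_def using integrable_cell
    by (intro Bochner_Integration.integral_sum[symmetric]) auto
  also have "\<dots> \<le> integral\<^sup>L lborel_01 (\<lambda>t. \<bar>emp_quantile a t - emp_quantile b t\<bar>)"
  proof (rule integral_lborel_01_ge)
    show "integrable lborel_01 (\<lambda>t. \<bar>emp_quantile a t - emp_quantile b t\<bar>)"
      using assms(1-5)
      by (intro integrable_abs Bochner_Integration.integrable_diff integrable_emp_quantile) auto
    show "integrable lborel \<psi>"
      unfolding \<psi>_def using integrable_cell by auto
    show "\<psi> t \<le> \<bar>emp_quantile a t - emp_quantile b t\<bar>" if "0 < t" "t < 1" for t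
    proof -
      have "\<psi> t = (\<Sum>k\<in>{i..j}. if k = nat \<lfloor>N * t\<rfloor> then cell k t else 0)"
        unfolding \<psi>_def using cell_eq_0 by (intro sum.cong) auto
      then show ?thesis using cell_le[of "nat \<lfloor>N * t\<rfloor>" t] by auto
    qed
    show "\<psi> t \<le> 0" if "t \<notin> {0<..<1}" for t
      unfolding \<psi>_def using cell_eq_0 that by simp
  qed
  finally show ?thesis .
qed

lemma integral_abs_diff_ge_if_flat:
  fixes g q :: "real \<Rightarrow> real"
  assumes q: "mono_on {0<..<1} q" and t: "0 < t1" "t1 < t2" "t2 < 1"
    and g: "integrable lborel_01 (\<lambda>t. \<bar>g t - q t\<bar>)"
    and flat: "\<And>t. t1 / 2 < t \<and> t < t1 \<or> t2 < t \<and> t < (1 + t2) / 2 \<Longrightarrow> lo \<le> g t \<and> g t \<le> hi"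
    and spread: "hi - lo < (q t2 - q t1) / 2"
  shows "(q t2 - q t1) / 4 * min (t1 / 2) ((1 - t2) / 2) \<le> integral\<^sup>L lborel_01 (\<lambda>t. \<bar>g t - q t\<bar>)"
proof -
  define D where "D = q t2 - q t1"
  have "0 \<le> D" using mono_onD[OF q] t by (simp add: D_def)
  have "D / 4 * min (t1 / 2) ((1 - t2) / 2) \<le> integral\<^sup>L lborel_01 (\<lambda>t. \<bar>g t - q t\<bar>)"
  proof (cases "q t1 + D / 4 < lo")
    case True
    have "D / 4 * (t1 - t1 / 2) \<le> integral\<^sup>L lborel_01 (\<lambda>t. \<bar>g t - q t\<bar>)"
    proof (rule integral_lborel_01_ge_interval[OF g])
      fix t assume "t1 / 2 < t" "t < t1"
      then have "q t \<le> q t1" "lo \<le> g t" using mono_onD[OF q, of t t1] flat[of t] t by auto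
      then show "D / 4 \<le> \<bar>g t - q t\<bar>" using True abs_ge_self[of "g t - q t"] by linarith
    qed (use t in auto)
    moreover have "D / 4 * min (t1 / 2) ((1 - t2) / 2) \<le> D / 4 * (t1 - t1 / 2)"
      using \<open>0 \<le> D\<close> by (intro mult_left_mono) (auto simp: min_def)
    ultimately show ?thesis by linarith
  next
    case False
    have "D / 4 * ((1 + t2) / 2 - t2) \<le> integral\<^sup>L lborel_01 (\<lambda>t. \<bar>g t - q t\<bar>)"
    proof (rule integral_lborel_01_ge_interval[OF g])
      fix t assume "t2 < t" "t < (1 + t2) / 2"
      then have "q t2 \<le> q t" "g t \<le> hi" using mono_onD[OF q, of t2 t] flat[of t] t by auto
      then show "D / 4 \<le> \<bar>g t - q t\<bar>"
        using False spread abs_ge_minus_self[of "g t - q t"] unfolding D_def by argo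
    qed (use t in auto)
    moreover have "D / 4 * min (t1 / 2) ((1 - t2) / 2) \<le> D / 4 * ((1 + t2) / 2 - t2)"
      using \<open>0 \<le> D\<close> by (intro mult_left_mono) (auto simp: min_def)
    ultimately show ?thesis by linarith
  qed
  then show ?thesis by (simp only: D_def)
qed

lemma margin_cell_indices:
  fixes \<epsilon> :: real
  assumes "0 < \<epsilon>" "\<epsilon> < 1" "0 < n"
  obtains i j where "real i < \<epsilon> * n" "\<epsilon> * n \<le> real i + 1" "i < n"
    "real n - \<epsilon> * n < real j + 1" "real j \<le> real n - \<epsilon> * n" "j < n"
proof
  have "0 < \<epsilon> * n" "\<epsilon> * n < n" using assms by simp_all
  then show "real (nat \<lceil>\<epsilon> * n\<rceil> - 1) < \<epsilon> * n" "\<epsilon> * n \<le> real (nat \<lceil>\<epsilon> * n\<rceil> - 1) + 1"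
    "nat \<lceil>\<epsilon> * n\<rceil> - 1 < n"
    "real n - \<epsilon> * n < real (nat \<lfloor>n - \<epsilon> * n\<rfloor>) + 1" "real (nat \<lfloor>n - \<epsilon> * n\<rfloor>) \<le> real n - \<epsilon> * n"
    "nat \<lfloor>n - \<epsilon> * n\<rfloor> < n"
    by linarith+
qed

lemma emp_quantile_within_margin_cells:
  fixes \<epsilon> t :: real
  assumes "sorted b" "length b = Suc n" "0 < \<epsilon>"
    and "real i < \<epsilon> * n" "real n - \<epsilon> * n < real j + 1" "j < n"
    and "\<epsilon> \<le> t" "t \<le> 1 - 2 * \<epsilon>"
  shows "b ! i \<le> emp_quantile b t" "emp_quantile b t \<le> b ! Suc j"
proof -
  have "\<epsilon> * n \<le> t * n" using assms(7) by (intro mult_right_mono) auto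
  moreover have "(n + 1) * t \<le> (n + 1) * (1 - 2 * \<epsilon>)" using assms(8) by (intro mult_left_mono) auto
  moreover have "(n + 1) * t = t * n + t" "(n + 1) * (1 - 2 * \<epsilon>) = n + 1 - 2 * (\<epsilon> * n) - 2 * \<epsilon>"
    by (simp_all add: algebra_simps)
  ultimately have "real i \<le> (n + 1) * t" "(n + 1) * t < real j + 2"
    using assms(3-5,7) by linarith+
  moreover have lb: "real (length b) = n + 1" using assms(2) by simp
  ultimately have "real i \<le> real (length b) * t" "real (length b) * t < real (Suc j) + 1"
    using of_nat_Suc[of j] unfolding lb by linarith+
  moreover have "t < 1" "b \<noteq> []" using assms(2,3,8) by auto
  ultimately show "b ! i \<le> emp_quantile b t" "emp_quantile b t \<le> b ! Suc j"
    using assms(1,2,6) by (auto intro: nth_le_emp_quantile emp_quantile_le_nth)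
qed

text \<open>The cells i..j of mesh 1/n cover [\<epsilon>, 1 - \<epsilon>]. Either b rises by D/2 across them and the
  interleaving bound applies, or b is nearly flat there and misses the rise of q from t1 to t2.\<close>
lemma integral_abs_emp_quantile_pair_ge:
  fixes q :: "real \<Rightarrow> real" and a b :: "real list"
  assumes ab: "sorted a" "sorted b" "length a = n" "length b = Suc n" "0 < n"
    and q: "mono_on {0<..<1} q" and t: "0 < t1" "t1 < t2" "t2 < 1" "q t1 < q t2"
    and int_a: "integrable lborel_01 (\<lambda>t. \<bar>emp_quantile a t - q t\<bar>)"
    and int_b: "integrable lborel_01 (\<lambda>t. \<bar>emp_quantile b t - q t\<bar>)"
  shows "min t1 (1 - t2) * (q t2 - q t1) / (8 * (real n + 1))
    \<le> integral\<^sup>L lborel_01 (\<lambda>t. \<bar>emp_quantile a t - q t\<bar>)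
      + integral\<^sup>L lborel_01 (\<lambda>t. \<bar>emp_quantile b t - q t\<bar>)" (is "?lhs \<le> ?A + ?B")
proof -
  define \<epsilon> where "\<epsilon> = min t1 (1 - t2) / 4"
  define D where "D = q t2 - q t1"
  have "0 < \<epsilon>" "\<epsilon> < 1" "0 < D" using t by (auto simp: \<epsilon>_def D_def)
  obtain i j where i: "real i < \<epsilon> * n" "\<epsilon> * n \<le> real i + 1" "i < n"
    and j: "real n - \<epsilon> * n < real j + 1" "real j \<le> real n - \<epsilon> * n" "j < n"
    using margin_cell_indices[OF \<open>0 < \<epsilon>\<close> \<open>\<epsilon> < 1\<close> ab(5)] by blast
  have lhs: "?lhs = \<epsilon> / (real n + 1) * (D / 2)" by (simp add: \<epsilon>_def D_def)
  show ?thesis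
  proof (cases "D / 2 \<le> b ! Suc j - b ! i")
    case True
    then have "i \<le> j"
      using sorted_nth_mono[OF ab(2), of "Suc j" i] \<open>0 < D\<close> i(3) ab(4) by (cases "i \<le> j") auto
    have "?lhs \<le> \<epsilon> / (real n + 1) * (b ! Suc j - b ! i)"
      unfolding lhs using True \<open>0 < \<epsilon>\<close> by (intro mult_left_mono) auto
    also have "\<dots> \<le> integral\<^sup>L lborel_01 (\<lambda>t. \<bar>emp_quantile a t - emp_quantile b t\<bar>)"
      using i j \<open>i \<le> j\<close> \<open>0 < \<epsilon>\<close> by (intro integral_abs_emp_quantile_diff_ge[OF ab]) auto
    also have "\<dots> \<le> ?A + ?B"
      using ab by (intro integral_abs_diff_triangle[OF _ int_a int_b] integrable_abs
          Bochner_Integration.integrable_diff integrable_emp_quantile) auto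
    finally show ?thesis .
  next
    case False
    have "b ! i \<le> emp_quantile b t \<and> emp_quantile b t \<le> b ! Suc j"
      if "t1 / 2 < t \<and> t < t1 \<or> t2 < t \<and> t < (1 + t2) / 2" for t
    proof -
      have "4 * \<epsilon> \<le> t1" "4 * \<epsilon> \<le> 1 - t2" by (simp_all add: \<epsilon>_def)
      with that t \<open>0 < \<epsilon>\<close> have "\<epsilon> \<le> t" "t \<le> 1 - 2 * \<epsilon>" by auto
      then show ?thesis
        using emp_quantile_within_margin_cells[OF ab(2,4) \<open>0 < \<epsilon>\<close> i(1) j(1,3)] by simp
    qed
    then have "D / 4 * min (t1 / 2) ((1 - t2) / 2) \<le> ?B"
      using False unfolding D_def by (intro integral_abs_diff_ge_if_flat[OF q t(1-3) int_b]) auto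
    moreover have "D / 4 * min (t1 / 2) ((1 - t2) / 2) = \<epsilon> * D / 2"
      by (auto simp: \<epsilon>_def min_def)
    moreover have "?lhs \<le> \<epsilon> * D / 2"
      unfolding lhs using \<open>0 < D\<close> \<open>0 < \<epsilon>\<close> by (simp add: field_simps)
    moreover have "0 \<le> ?A" by (rule integral_nonneg_AE) simp
    ultimately show ?thesis by linarith
  qed
qed

lemma (in cdf_distribution) wass_dist_emp_measure_pair_ge:
  assumes "1 \<le> r" "integrable M (\<lambda>x. \<bar>x\<bar> powr r)"
    and t: "0 < t1" "t1 < t2" "t2 < 1" "quantile M t1 < quantile M t2"
    and ab: "sorted a" "sorted b" "length a = n" "length b = Suc n" "0 < n"
  shows "min t1 (1 - t2) * (quantile M t2 - quantile M t1) / (8 * (real n + 1))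
    \<le> wass_dist r (emp_measure a) M + wass_dist r (emp_measure b) M"
proof -
  have "a \<noteq> []" "b \<noteq> []" using ab(3-5) by auto
  note a = integral_abs_emp_quantile_diff_le_wass_dist[OF assms(1,2) ab(1) \<open>a \<noteq> []\<close>]
  note b = integral_abs_emp_quantile_diff_le_wass_dist[OF assms(1,2) ab(2) \<open>b \<noteq> []\<close>]
  show ?thesis
    using integral_abs_emp_quantile_pair_ge[OF ab mono_on_quantile t a(1) b(1)] a(2) b(2)
    by linarith
qed

theorem theorem5p7:
  fixes \<mu> :: "real measure" and r :: real
  assumes "r \<ge> 1"
    and "prob_space \<mu>" and "sets \<mu> = sets borel"
    and "integrable \<mu> (\<lambda>x. \<bar>x\<bar> powr r)"
    and "\<not> (\<exists>a::real. \<mu> = return borel a)"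
  shows "limsup (\<lambda>n. ereal (real n * opt_quant_dist r n \<mu>)) > 0"
proof -
  interpret cdf_distribution \<mu>
    using assms(2,3)
    by (simp add: cdf_distribution_def real_distribution_def real_distribution_axioms_def)
  obtain t1 t2 where t: "0 < t1" "t1 < t2" "t2 < 1" "quantile \<mu> t1 < quantile \<mu> t2"
    using ex_quantile_less assms(5) by blast
  define c where "c = min t1 (1 - t2) * (quantile \<mu> t2 - quantile \<mu> t1) / 8"
  have "c / (real n + 1) \<le> opt_quant_dist r n \<mu> + opt_quant_dist r (Suc n) \<mu>" if "0 < n" for n
    unfolding opt_quant_dist_def
  proof (rule le_Inf_add_Inf)
    fix a b :: "real list"
    assume "a \<in> {xs. length xs = n \<and> sorted xs}" "b \<in> {xs. length xs = Suc n \<and> sorted xs}"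
    then show "c / (real n + 1) \<le> wass_dist r (emp_measure a) \<mu> + wass_dist r (emp_measure b) \<mu>"
      using wass_dist_emp_measure_pair_ge[OF assms(1,4) t, of a b n] \<open>0 < n\<close> by (simp add: c_def)
  qed (auto intro: exI[of _ "replicate _ 0"])
  moreover have "0 < c" using t by (simp add: c_def)
  ultimately show ?thesis by (intro limsup_mult_pos_if_consecutive_sum_ge)
qed

end
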